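(* If $G$ is a perfect graph with demand function $f$ such that $f(v) \leq 1/\omega(v)$ for each $v\in V(G)$, where $\omega(v)$ is the size of a largest clique in $G[N[v]]$, then $G$ has an $f$-coloring.
   Context: $N[v]$ is the closed neighborhood of $v$. A demand function for a graph $G$ is a function $f: V(G)\to [0,1]\cap\mathbb{Q}$. A fractional coloring of $G$ is a function $\phi$ assigning to each $v\in V(G)$ a measurable subset $\phi(v)\subseteq[0,1]$ such that $\phi(u)\cap\phi(v)=\varnothing$ for every edge $uv$. An $f$-coloring is a fractional coloring $\phi$ with $\mu(\phi(v))\geq f(v)$ for every $v$, where $\mu$ is Lebesgue measure. *)

theory Defs
  imports "HOL-Analysis.Analysis"
begin

definition simple_graph :: "'a set \<Rightarrow> ('a \<Rightarrow> 'a \<Rightarrow> bool) \<Rightarrow> bool" where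
  "simple_graph V E \<longleftrightarrow> finite V \<and> (\<forall>u v. E u v \<longrightarrow> u \<in> V \<and> v \<in> V \<and> u \<noteq> v \<and> E v u)"

definition induced_edges :: "('a \<Rightarrow> 'a \<Rightarrow> bool) \<Rightarrow> 'a set \<Rightarrow> 'a \<Rightarrow> 'a \<Rightarrow> bool" where
  "induced_edges E S = (\<lambda>u v. E u v \<and> u \<in> S \<and> v \<in> S)"

definition is_clique :: "'a set \<Rightarrow> ('a \<Rightarrow> 'a \<Rightarrow> bool) \<Rightarrow> 'a set \<Rightarrow> bool" where
  "is_clique V E K \<longleftrightarrow> K \<subseteq> V \<and> (\<forall>u\<in>K. \<forall>v\<in>K. u \<noteq> v \<longrightarrow> E u v)"

definition clique_number :: "'a set \<Rightarrow> ('a \<Rightarrow> 'a \<Rightarrow> bool) \<Rightarrow> nat" where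
  "clique_number V E = Max {card K | K. is_clique V E K}"

definition proper_colouring :: "'a set \<Rightarrow> ('a \<Rightarrow> 'a \<Rightarrow> bool) \<Rightarrow> nat \<Rightarrow> ('a \<Rightarrow> nat) \<Rightarrow> bool" where
  "proper_colouring V E k c \<longleftrightarrow> c ` V \<subseteq> {..<k} \<and> (\<forall>u\<in>V. \<forall>v\<in>V. E u v \<longrightarrow> c u \<noteq> c v)"

definition chromatic_number :: "'a set \<Rightarrow> ('a \<Rightarrow> 'a \<Rightarrow> bool) \<Rightarrow> nat" where
  "chromatic_number V E = (LEAST k. \<exists>c. proper_colouring V E k c)"

definition perfect_graph :: "'a set \<Rightarrow> ('a \<Rightarrow> 'a \<Rightarrow> bool) \<Rightarrow> bool" where
  "perfect_graph V E \<longleftrightarrow> simple_graph V E \<and>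
     (\<forall>S\<subseteq>V. chromatic_number S (induced_edges E S) = clique_number S (induced_edges E S))"

definition closed_nbhd :: "'a set \<Rightarrow> ('a \<Rightarrow> 'a \<Rightarrow> bool) \<Rightarrow> 'a \<Rightarrow> 'a set" where
  "closed_nbhd V E v = insert v {u\<in>V. E v u}"

definition local_clique_number :: "'a set \<Rightarrow> ('a \<Rightarrow> 'a \<Rightarrow> bool) \<Rightarrow> 'a \<Rightarrow> nat" where
  "local_clique_number V E v =
     clique_number (closed_nbhd V E v) (induced_edges E (closed_nbhd V E v))"

definition demand_function :: "'a set \<Rightarrow> ('a \<Rightarrow> real) \<Rightarrow> bool" where
  "demand_function V f \<longleftrightarrow> (\<forall>v\<in>V. f v \<in> \<rat> \<and> 0 \<le> f v \<and> f v \<le> 1)"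

definition fractional_colouring :: "'a set \<Rightarrow> ('a \<Rightarrow> 'a \<Rightarrow> bool) \<Rightarrow> ('a \<Rightarrow> real set) \<Rightarrow> bool" where
  "fractional_colouring V E \<phi> \<longleftrightarrow>
     (\<forall>v\<in>V. \<phi> v \<in> sets lebesgue \<and> \<phi> v \<subseteq> {0..1}) \<and>
     (\<forall>u\<in>V. \<forall>v\<in>V. E u v \<longrightarrow> \<phi> u \<inter> \<phi> v = {})"

definition f_colouring :: "'a set \<Rightarrow> ('a \<Rightarrow> 'a \<Rightarrow> bool) \<Rightarrow> ('a \<Rightarrow> real) \<Rightarrow> ('a \<Rightarrow> real set) \<Rightarrow> bool" where
  "f_colouring V E f \<phi> \<longleftrightarrow> fractional_colouring V E \<phi> \<and>
     (\<forall>v\<in>V. measure lebesgue (\<phi> v) \<ge> f v)"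

end

theory Submission
  imports Defs
begin

text \<open>
  Clearing denominators turns the rational demand f into integer weights a = N f, and a clique K
  has weight at most N because every v \<in> K has \<omega>(v) \<ge> |K|. Perfect graphs are weighted-perfect:
  they admit a multicolouring with as many colours as the maximum clique weight, giving each
  vertex u a set of a(u) colours, disjoint for adjacent vertices; colour i then becomes the
  interval [i/N, (i+1)/N). For 0/1 weights this is perfection of the subgraph induced by the
  support. A weight is raised at v by adding a fresh colour if v lies in a maximum-weight clique;
  otherwise every maximum-weight clique meets the class of a colour c of v away from v, so
  lowering the weights on that class (except at v) lowers the maximum clique weight by one, and
  the class can be recoloured with a single new colour.
\<close>

lemma finite_simple_graph:
  assumes "simple_graph V E"
  shows "finite V"
  using assms by (simp add: simple_graph_def)

lemma simple_graph_induced: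
  assumes "simple_graph V E" and "S \<subseteq> V"
  shows "simple_graph S (induced_edges E S)"
  using assms finite_subset by (auto simp: simple_graph_def induced_edges_def)

lemma finite_cliques:
  assumes "finite V"
  shows "finite {K. is_clique V E K}"
proof (rule finite_subset)
  show "{K. is_clique V E K} \<subseteq> Pow V"
    by (auto simp: is_clique_def)
qed (use assms in simp)

lemma finite_clique:
  assumes "finite V" and "is_clique V E K"
  shows "finite K"
  using assms finite_subset by (auto simp: is_clique_def)

lemma proper_colouring_card:
  assumes "simple_graph V E"
  shows "\<exists>c. proper_colouring V E (card V) c"
proof -
  obtain g where g: "bij_betw g V {0..<card V}"
    using assms ex_bij_betw_finite_nat unfolding simple_graph_def by blast
  have "g u \<noteq> g v" if "E u v" for u v
    using g assms that unfolding simple_graph_def bij_betw_def inj_on_def by metis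
  then have "proper_colouring V E (card V) g"
    using g by (auto simp: proper_colouring_def bij_betw_def)
  then show ?thesis by blast
qed

lemma proper_colouring_chromatic_number:
  assumes "simple_graph V E"
  shows "\<exists>c. proper_colouring V E (chromatic_number V E) c"
  unfolding chromatic_number_def
  by (rule LeastI_ex[where P = "\<lambda>k. \<exists>c. proper_colouring V E k c"])
    (use proper_colouring_card[OF assms] in blast)

lemma perfect_graph_colouring_induced:
  assumes "perfect_graph V E" and "S \<subseteq> V"
  shows "\<exists>c. proper_colouring S (induced_edges E S) (clique_number S (induced_edges E S)) c"
  using assms proper_colouring_chromatic_number[OF simple_graph_induced, of V E S]
  by (simp add: perfect_graph_def)

definition max_clique_weight :: "'a set \<Rightarrow> ('a \<Rightarrow> 'a \<Rightarrow> bool) \<Rightarrow> ('a \<Rightarrow> nat) \<Rightarrow> nat" where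
  "max_clique_weight V E a = Max {sum a K | K. is_clique V E K}"

lemma clique_number_eq_max_clique_weight:
  "clique_number V E = max_clique_weight V E (\<lambda>_. 1)"
  by (simp add: clique_number_def max_clique_weight_def)

lemma max_clique_weight_le_iff:
  assumes "finite V"
  shows "max_clique_weight V E a \<le> n \<longleftrightarrow> (\<forall>K. is_clique V E K \<longrightarrow> sum a K \<le> n)"
proof -
  have "is_clique V E {}"
    by (simp add: is_clique_def)
  then have "sum a ` {K. is_clique V E K} \<noteq> {}"
    by blast
  moreover have "{sum a K | K. is_clique V E K} = sum a ` {K. is_clique V E K}"
    by auto
  ultimately show ?thesis
    using finite_cliques[OF assms] by (simp add: max_clique_weight_def)
qed

lemma clique_weight_le_max_clique_weight:
  assumes "finite V" and "is_clique V E K"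
  shows "sum a K \<le> max_clique_weight V E a"
  using assms max_clique_weight_le_iff by blast

lemma max_clique_weight_mono:
  assumes "finite V" and "\<forall>u\<in>V. a u \<le> b u"
  shows "max_clique_weight V E a \<le> max_clique_weight V E b"
  unfolding max_clique_weight_le_iff[OF assms(1)]
proof (intro allI impI)
  fix K assume K: "is_clique V E K"
  then have "sum a K \<le> sum b K"
    using assms(2) by (intro sum_mono) (auto simp: is_clique_def)
  also have "\<dots> \<le> max_clique_weight V E b"
    using clique_weight_le_max_clique_weight[OF assms(1) K] .
  finally show "sum a K \<le> max_clique_weight V E b" .
qed

lemma card_clique_le_local_clique_number:
  assumes "simple_graph V E" and "is_clique V E K" and "v \<in> K"
  shows "card K \<le> local_clique_number V E v"
proof -
  let ?N = "closed_nbhd V E v"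
  have "finite ?N"
    using assms(1) by (simp add: simple_graph_def closed_nbhd_def)
  moreover have "is_clique ?N (induced_edges E ?N) K"
    using assms(2,3) by (auto simp: is_clique_def induced_edges_def closed_nbhd_def)
  ultimately show ?thesis
    unfolding local_clique_number_def clique_number_eq_max_clique_weight
    by (metis card_eq_sum clique_weight_le_max_clique_weight)
qed

definition multicolouring ::
    "'a set \<Rightarrow> ('a \<Rightarrow> 'a \<Rightarrow> bool) \<Rightarrow> nat \<Rightarrow> ('a \<Rightarrow> nat) \<Rightarrow> ('a \<Rightarrow> nat set) \<Rightarrow> bool" where
  "multicolouring V E N a C \<longleftrightarrow>
     (\<forall>u\<in>V. C u \<subseteq> {..<N} \<and> card (C u) = a u) \<and>
     (\<forall>u\<in>V. \<forall>w\<in>V. E u w \<longrightarrow> C u \<inter> C w = {})"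

definition colour_class :: "'a set \<Rightarrow> ('a \<Rightarrow> nat set) \<Rightarrow> nat \<Rightarrow> 'a set" where
  "colour_class V C c = {u\<in>V. c \<in> C u}"

lemma multicolouring_mono:
  assumes "multicolouring V E N a C" and "N \<le> N'"
  shows "multicolouring V E N' a C"
  using assms by (fastforce simp: multicolouring_def)

lemma finite_multicolouring_colours:
  assumes "multicolouring V E N a C" and "u \<in> V"
  shows "finite (C u)"
  using assms finite_subset[of "C u" "{..<N}"] by (simp add: multicolouring_def)

lemma colour_less_multicolouring:
  assumes "multicolouring V E N a C" and "u \<in> V" and "c \<in> C u"
  shows "c < N"
  using assms by (auto simp: multicolouring_def)

lemma weight_pos_colour_class:
  assumes "multicolouring V E N a C" and "u \<in> colour_class V C c"
  shows "0 < a u"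
proof -
  have "u \<in> V" and "c \<in> C u"
    using assms(2) by (auto simp: colour_class_def)
  then show ?thesis
    using assms(1) finite_multicolouring_colours[OF assms(1)]
    by (metis card_gt_0_iff empty_iff multicolouring_def)
qed

lemma card_UN_multicolouring_clique:
  assumes "multicolouring V E N a C" and "is_clique V E K" and "finite K"
  shows "card (\<Union>u\<in>K. C u) = sum a K"
proof -
  have "K \<subseteq> V"
    using assms(2) by (simp add: is_clique_def)
  moreover have "\<forall>u\<in>K. \<forall>w\<in>K. u \<noteq> w \<longrightarrow> C u \<inter> C w = {}"
    using assms(1,2) \<open>K \<subseteq> V\<close> unfolding multicolouring_def is_clique_def by blast
  ultimately have "card (\<Union>u\<in>K. C u) = (\<Sum>u\<in>K. card (C u))"
    using assms(3) finite_multicolouring_colours[OF assms(1)] by (intro card_UN_disjoint) auto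
  also have "\<dots> = sum a K"
    using assms(1) \<open>K \<subseteq> V\<close> by (intro sum.cong) (auto simp: multicolouring_def)
  finally show ?thesis .
qed

lemma clique_weight_le_colours:
  assumes "multicolouring V E N a C" and "is_clique V E K" and "finite K"
  shows "sum a K \<le> N"
proof -
  have "(\<Union>u\<in>K. C u) \<subseteq> {..<N}"
    using assms(1,2) by (auto simp: multicolouring_def is_clique_def)
  then have "card (\<Union>u\<in>K. C u) \<le> N"
    by (metis card_lessThan card_mono finite_lessThan)
  then show ?thesis
    using card_UN_multicolouring_clique[OF assms] by simp
qed

lemma tight_clique_meets_colour_class:
  assumes "multicolouring V E N a C" and "is_clique V E K" and "finite K"
    and "sum a K = N" and "c < N"
  shows "K \<inter> colour_class V C c \<noteq> {}"
proof
  assume "K \<inter> colour_class V C c = {}"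
  then have "(\<Union>u\<in>K. C u) \<subseteq> {..<N} - {c}"
    using assms(1,2) by (auto simp: multicolouring_def is_clique_def colour_class_def)
  then have "card (\<Union>u\<in>K. C u) \<le> N - 1"
    using assms(5) by (metis card_Diff_singleton card_lessThan card_mono finite_Diff finite_lessThan lessThan_iff)
  then show False
    using card_UN_multicolouring_clique[OF assms(1-3)] assms(4,5) by simp
qed

lemma independent_colour_class:
  assumes "multicolouring V E N a C" and "u \<in> colour_class V C c" and "w \<in> colour_class V C c"
  shows "\<not> E u w"
  using assms unfolding multicolouring_def colour_class_def by blast

lemma multicolouring_add_colour_class:
  assumes "multicolouring V E N b D" and "\<forall>u\<in>A. \<forall>w\<in>A. \<not> E u w"
    and "\<forall>u\<in>V. a u = (if u \<in> A then Suc (b u) else b u)"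
  shows "multicolouring V E (Suc N) a (\<lambda>u. if u \<in> A then insert N (D u) else D u)"
proof -
  have "N \<notin> D u" if "u \<in> V" for u
    using assms(1) that by (auto simp: multicolouring_def)
  then show ?thesis
    using assms finite_multicolouring_colours[OF assms(1)] by (fastforce simp: multicolouring_def)
qed

lemma sum_fun_upd_Suc:
  assumes "finite K" and "v \<in> K"
  shows "sum (a(v := Suc (a v))) K = Suc (sum a K)"
proof -
  have "sum (a(v := Suc (a v))) (K - {v}) = sum a (K - {v})"
    by (intro sum.cong) auto
  then show ?thesis
    using assms by (simp add: sum.remove)
qed

lemma perfect_graph_multicolouring_0_1:
  assumes "perfect_graph V E" and "\<forall>u\<in>V. a u \<le> 1"
  shows "\<exists>C. multicolouring V E (max_clique_weight V E a) a C"
proof -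
  have "finite V"
    using assms(1) by (simp add: perfect_graph_def simple_graph_def)
  define S where "S = {u\<in>V. a u = 1}"
  let ?E = "induced_edges E S"
  obtain c where c: "proper_colouring S ?E (clique_number S ?E) c"
    using perfect_graph_colouring_induced[OF assms(1), of S] by (auto simp: S_def)
  have "finite S"
    using \<open>finite V\<close> by (simp add: S_def)
  have "clique_number S ?E \<le> max_clique_weight V E a"
    unfolding clique_number_eq_max_clique_weight max_clique_weight_le_iff[OF \<open>finite S\<close>]
  proof (intro allI impI)
    fix K assume "is_clique S ?E K"
    then have K: "is_clique V E K" "K \<subseteq> S"
      by (auto simp: is_clique_def induced_edges_def S_def)
    then have "(\<Sum>_\<in>K. 1) = sum a K"
      by (intro sum.cong) (auto simp: S_def)
    also have "\<dots> \<le> max_clique_weight V E a"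
      using clique_weight_le_max_clique_weight[OF \<open>finite V\<close> K(1)] .
    finally show "(\<Sum>_\<in>K. 1) \<le> max_clique_weight V E a" .
  qed
  moreover have "multicolouring V E (clique_number S ?E) a (\<lambda>u. if u \<in> S then {c u} else {})"
    using c assms(2) le_Suc_eq
    by (fastforce simp: multicolouring_def proper_colouring_def induced_edges_def S_def)
  ultimately show ?thesis
    by (blast intro: multicolouring_mono)
qed

lemma max_clique_weight_remove_colour_class:
  assumes "finite V" and "multicolouring V E M a C" and "v \<in> V" and "c \<in> C v"
    and "\<And>K. is_clique V E K \<Longrightarrow> v \<in> K \<Longrightarrow> sum a K < M"
  shows "max_clique_weight V E (\<lambda>u. if u \<in> colour_class V C c - {v} then a u - 1 else a u) \<le> M - 1"
    (is "max_clique_weight V E ?b \<le> _")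
  unfolding max_clique_weight_le_iff[OF assms(1)]
proof (intro allI impI)
  fix K assume K: "is_clique V E K"
  have "finite K"
    using finite_clique[OF assms(1) K] .
  have b_le: "sum ?b K \<le> sum a K"
    by (intro sum_mono) auto
  have "c < M"
    using colour_less_multicolouring[OF assms(2-4)] .
  consider "sum a K < M" | "v \<notin> K" "sum a K = M"
    using clique_weight_le_colours[OF assms(2) K \<open>finite K\<close>] assms(5)[OF K] by fastforce
  then show "sum ?b K \<le> M - 1"
  proof cases
    case 1
    with b_le show ?thesis by linarith
  next
    case 2
    obtain u where u: "u \<in> K" "u \<in> colour_class V C c"
      using tight_clique_meets_colour_class[OF assms(2) K \<open>finite K\<close> 2(2) \<open>c < M\<close>] by blast
    have "u \<noteq> v"
      using u(1) 2(1) by blast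
    have "1 \<le> a u"
      using weight_pos_colour_class[OF assms(2) u(2)] by simp
    have "sum ?b K = (a u - 1) + sum ?b (K - {u})"
      using u \<open>u \<noteq> v\<close> \<open>finite K\<close> by (simp add: sum.remove)
    also have "\<dots> \<le> (a u - 1) + sum a (K - {u})"
      by (intro add_left_mono sum_mono) auto
    also have "\<dots> = sum a K - 1"
      using u(1) \<open>finite K\<close> \<open>1 \<le> a u\<close> by (simp add: sum.remove)
    finally show ?thesis
      using 2(2) by simp
  qed
qed

lemma multicolouring_raise_vertex:
  assumes "multicolouring V E M a C" and "\<not> E v v"
  shows "\<exists>C'. multicolouring V E (Suc M) (a(v := Suc (a v))) C'"
proof -
  have "multicolouring V E (Suc M) (a(v := Suc (a v))) (\<lambda>u. if u \<in> {v} then insert M (C u) else C u)"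
    using assms(2) by (intro multicolouring_add_colour_class[OF assms(1)]) auto
  then show ?thesis
    by blast
qed

lemma multicolouring_recolour_class:
  assumes "multicolouring V E M a C" and "v \<in> V" and "c \<in> C v"
    and "multicolouring V E (M - 1) (\<lambda>u. if u \<in> colour_class V C c - {v} then a u - 1 else a u) D"
  shows "\<exists>C'. multicolouring V E M (a(v := Suc (a v))) C'"
proof -
  let ?A = "colour_class V C c"
  let ?b = "\<lambda>u. if u \<in> ?A - {v} then a u - 1 else a u"
  have "c < M"
    using colour_less_multicolouring[OF assms(1-3)] .
  have "0 < a u" if "u \<in> ?A" for u
    using weight_pos_colour_class[OF assms(1) that] .
  then have "\<forall>u\<in>V. (a(v := Suc (a v))) u = (if u \<in> ?A then Suc (?b u) else ?b u)"
    using assms(2,3) by (auto simp: colour_class_def)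
  then have "multicolouring V E (Suc (M - 1)) (a(v := Suc (a v)))
      (\<lambda>u. if u \<in> ?A then insert (M - 1) (D u) else D u)"
    using independent_colour_class[OF assms(1)]
    by (intro multicolouring_add_colour_class[OF assms(4)]) blast+
  then show ?thesis
    using \<open>c < M\<close> by (metis Suc_pred' gr_implies_not0 zero_less_iff_neq_zero)
qed

lemma multicolouring_raise_weight:
  assumes "finite V" and "v \<in> V" and "\<not> E v v" and "0 < a v"
    and C: "multicolouring V E (max_clique_weight V E a) a C"
    and smaller: "\<And>b. \<forall>u\<in>V. b u \<le> a u \<Longrightarrow> \<exists>D. multicolouring V E (max_clique_weight V E b) b D"
  shows "\<exists>C'. multicolouring V E (max_clique_weight V E (a(v := Suc (a v)))) (a(v := Suc (a v))) C'"
    (is "\<exists>C'. multicolouring V E (max_clique_weight V E ?a) ?a C'")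
proof -
  define M where "M = max_clique_weight V E a"
  have "M \<le> max_clique_weight V E ?a"
    unfolding M_def using assms(1) by (intro max_clique_weight_mono) auto
  show ?thesis
  proof (cases "\<exists>K. is_clique V E K \<and> v \<in> K \<and> sum a K = M")
    case True
    then obtain K where K: "is_clique V E K" "v \<in> K" "sum a K = M"
      by blast
    have "Suc M = sum ?a K"
      using sum_fun_upd_Suc[OF finite_clique[OF assms(1) K(1)] K(2)] K(3) by simp
    then have "Suc M \<le> max_clique_weight V E ?a"
      by (metis clique_weight_le_max_clique_weight[OF assms(1) K(1)])
    moreover obtain C' where "multicolouring V E (Suc M) ?a C'"
      using multicolouring_raise_vertex[OF C \<open>\<not> E v v\<close>] unfolding M_def by blast
    ultimately show ?thesis
      by (blast intro: multicolouring_mono)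
  next
    case False
    have "card (C v) = a v"
      using C \<open>v \<in> V\<close> by (simp add: multicolouring_def)
    then obtain c where c: "c \<in> C v"
      using \<open>0 < a v\<close> by fastforce
    define b where "b = (\<lambda>u. if u \<in> colour_class V C c - {v} then a u - 1 else a u)"
    have "sum a K < M" if "is_clique V E K" and "v \<in> K" for K
    proof -
      have "sum a K \<le> M"
        unfolding M_def using clique_weight_le_colours[OF C that(1) finite_clique[OF assms(1) that(1)]] .
      moreover have "sum a K \<noteq> M"
        using False that by blast
      ultimately show ?thesis
        by simp
    qed
    then have "max_clique_weight V E b \<le> M - 1"
      unfolding b_def M_def by (rule max_clique_weight_remove_colour_class[OF assms(1) C assms(2) c])
    moreover have "\<forall>u\<in>V. b u \<le> a u"
      by (simp add: b_def)
    then obtain D where "multicolouring V E (max_clique_weight V E b) b D"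
      using smaller by blast
    ultimately have "multicolouring V E (M - 1) b D"
      by (blast intro: multicolouring_mono)
    then obtain C' where "multicolouring V E M ?a C'"
      using multicolouring_recolour_class[OF C \<open>v \<in> V\<close> c] unfolding b_def M_def by blast
    then show ?thesis
      using \<open>M \<le> max_clique_weight V E ?a\<close> by (blast intro: multicolouring_mono)
  qed
qed

theorem perfect_graph_multicolouring:
  assumes "perfect_graph V E"
  shows "\<exists>C. multicolouring V E (max_clique_weight V E a) a C"
proof (induction "sum a V" arbitrary: a rule: less_induct)
  case less
  have "finite V"
    using assms by (simp add: perfect_graph_def simple_graph_def)
  show ?case
  proof (cases "\<forall>u\<in>V. a u \<le> 1")
    case True
    then show ?thesis
      using perfect_graph_multicolouring_0_1[OF assms] by blast
  next
    case False
    then obtain v where "v \<in> V" and "2 \<le> a v"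
      by (auto simp: not_le)
    have "\<not> E v v"
      using assms by (auto simp: perfect_graph_def simple_graph_def)
    define a' where "a' = a(v := a v - 1)"
    have a_eq: "a = a'(v := Suc (a' v))"
      using \<open>2 \<le> a v\<close> by (auto simp: a'_def)
    have "0 < a' v"
      using \<open>2 \<le> a v\<close> by (simp add: a'_def)
    have "sum a' V < sum a V"
      using \<open>finite V\<close> \<open>v \<in> V\<close> \<open>2 \<le> a v\<close> by (intro sum_strict_mono_ex1) (auto simp: a'_def)
    then obtain C where C: "multicolouring V E (max_clique_weight V E a') a' C"
      using less by blast
    have "\<exists>D. multicolouring V E (max_clique_weight V E b) b D" if "\<forall>u\<in>V. b u \<le> a' u" for b
    proof -
      have "sum b V \<le> sum a' V"
        using that by (simp add: sum_mono)
      then show ?thesis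
        using \<open>sum a' V < sum a V\<close> less by (meson le_less_trans)
    qed
    then show ?thesis
      using multicolouring_raise_weight[of V v E, OF \<open>finite V\<close> \<open>v \<in> V\<close> \<open>\<not> E v v\<close>
          \<open>0 < a' v\<close> C]
      unfolding a_eq by blast
  qed
qed

lemma nonneg_rationals_common_denominator:
  assumes "finite V" and "\<forall>v\<in>V. f v \<in> \<rat> \<and> 0 \<le> f v"
  obtains N :: nat and a :: "'a \<Rightarrow> nat" where "0 < N" and "\<forall>v\<in>V. real (a v) = f v * real N"
proof -
  have "\<forall>v\<in>V. \<exists>d::nat. 0 < d \<and> f v * real d \<in> \<int>"
  proof
    fix v assume "v \<in> V"
    then have "f v \<in> \<rat>"
      using assms(2) by blast
    then obtain p q :: int where "0 < q" and "f v = of_int p / of_int q"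
      by (rule Rats_cases') blast
    then show "\<exists>d::nat. 0 < d \<and> f v * real d \<in> \<int>"
      by (intro exI[of _ "nat q"]) auto
  qed
  from bchoice[OF this] obtain d :: "'a \<Rightarrow> nat"
    where d: "\<forall>v\<in>V. 0 < d v \<and> f v * real (d v) \<in> \<int>"
    by blast
  define N where "N = (\<Prod>v\<in>V. d v)"
  have "\<exists>n::nat. real n = f v * real N" if "v \<in> V" for v
  proof -
    have "f v * real N = f v * real (d v) * real (\<Prod>u\<in>V - {v}. d u)"
      using assms(1) that by (simp add: N_def prod.remove)
    also have "\<dots> \<in> \<int>"
      using d that Ints_mult Ints_of_nat by blast
    finally have "f v * real N \<in> \<int>" .
    moreover have "0 \<le> f v * real N"
      using assms(2) that by simp
    ultimately have "f v * real N \<in> \<nat>"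
      by (simp add: Nats_altdef2)
    then show ?thesis
      by (auto elim!: Nats_cases)
  qed
  then obtain a :: "'a \<Rightarrow> nat" where "\<forall>v\<in>V. real (a v) = f v * real N"
    by metis
  moreover have "0 < N"
    using assms(1) d by (simp add: N_def)
  ultimately show ?thesis
    using that by blast
qed

lemma clique_demand_le_1:
  assumes "simple_graph V E" and "is_clique V E K"
    and "\<forall>v\<in>K. f v \<le> 1 / real (local_clique_number V E v)"
  shows "sum f K \<le> 1"
proof (cases "K = {}")
  case False
  have "finite K"
    using finite_clique[OF finite_simple_graph[OF assms(1)] assms(2)] .
  have "f v \<le> 1 / real (card K)" if "v \<in> K" for v
  proof -
    have "f v \<le> 1 / real (local_clique_number V E v)"
      using assms(3) that by blast
    also have "\<dots> \<le> 1 / real (card K)"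
      using card_clique_le_local_clique_number[OF assms(1,2) that] False \<open>finite K\<close>
      by (simp add: frac_le card_gt_0_iff)
    finally show ?thesis .
  qed
  then have "sum f K \<le> real (card K) * (1 / real (card K))"
    by (rule sum_bounded_above)
  then show ?thesis
    using False \<open>finite K\<close> by simp
qed simp

lemma max_clique_weight_scaled_demand:
  assumes "simple_graph V E" and "\<forall>v\<in>V. real (a v) = f v * real N"
    and "\<forall>v\<in>V. f v \<le> 1 / real (local_clique_number V E v)"
  shows "max_clique_weight V E a \<le> N"
  unfolding max_clique_weight_le_iff[OF finite_simple_graph[OF assms(1)]]
proof (intro allI impI)
  fix K assume K: "is_clique V E K"
  then have "K \<subseteq> V"
    by (simp add: is_clique_def)
  have "real (sum a K) = sum f K * real N"
    using assms(2) \<open>K \<subseteq> V\<close> by (simp add: sum_distrib_right subset_iff)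
  also have "\<dots> \<le> 1 * real N"
    using clique_demand_le_1[OF assms(1) K] assms(3) \<open>K \<subseteq> V\<close>
    by (intro mult_right_mono) auto
  finally show "sum a K \<le> N"
    by (simp only: mult_1 of_nat_le_iff)
qed

definition slot :: "nat \<Rightarrow> nat \<Rightarrow> real set" where
  "slot N i = {real i / real N ..< real (Suc i) / real N}"

lemma slot_disjoint:
  assumes "0 < N" and "i \<noteq> j"
  shows "slot N i \<inter> slot N j = {}"
proof -
  have "x \<notin> slot N j" if "x \<in> slot N i" for x
  proof
    assume "x \<in> slot N j"
    with that assms(1) have "real i \<le> x * N" "x * N < real (Suc i)"
        and "real j \<le> x * N" "x * N < real (Suc j)"
      by (auto simp: slot_def field_simps)
    then show False
      using assms(2) by linarith
  qed
  then show ?thesis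
    by blast
qed

lemma slot_subset_unit_interval:
  assumes "i < N"
  shows "slot N i \<subseteq> {0..1}"
proof
  fix x assume "x \<in> slot N i"
  then have "real i / real N \<le> x" and "x < real (Suc i) / real N"
    by (auto simp: slot_def)
  moreover have "0 \<le> real i / real N"
    by simp
  moreover have "real (Suc i) / real N \<le> 1"
    using assms by (simp add: field_simps)
  ultimately show "x \<in> {0..1}"
    unfolding atLeastAtMost_iff by linarith
qed

lemma measure_slot:
  assumes "0 < N"
  shows "measure lebesgue (slot N i) = 1 / real N"
  using assms by (simp add: slot_def divide_right_mono diff_divide_distrib[symmetric])

lemma measure_UN_slot:
  assumes "0 < N" and "finite S"
  shows "measure lebesgue (\<Union>i\<in>S. slot N i) = real (card S) / real N"
proof -
  have "measure lebesgue (\<Union>i\<in>S. slot N i) = (\<Sum>i\<in>S. measure lebesgue (slot N i))"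
  proof (rule measure_finite_Union[OF assms(2)])
    show "slot N ` S \<subseteq> sets lebesgue"
      by (auto simp: slot_def)
    show "disjoint_family_on (slot N) S"
      using slot_disjoint[OF assms(1)] by (auto simp: disjoint_family_on_def)
    show "emeasure lebesgue (slot N i) \<noteq> \<infinity>" for i
      using assms(1) by (simp add: slot_def divide_right_mono)
  qed
  then show ?thesis
    using measure_slot[OF assms(1)] by simp
qed

lemma f_colouring_of_multicolouring:
  assumes "multicolouring V E N a C" and "0 < N" and "\<forall>v\<in>V. f v \<le> real (a v) / real N"
  shows "f_colouring V E f (\<lambda>v. \<Union>i\<in>C v. slot N i)"
  unfolding f_colouring_def fractional_colouring_def
proof (intro conjI ballI impI)
  fix v assume "v \<in> V"
  then have "C v \<subseteq> {..<N}" and "card (C v) = a v"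
    using assms(1) by (auto simp: multicolouring_def)
  have "finite (C v)"
    using finite_multicolouring_colours[OF assms(1) \<open>v \<in> V\<close>] .
  show "(\<Union>i\<in>C v. slot N i) \<in> sets lebesgue"
    using \<open>finite (C v)\<close> by (intro sets.finite_UN) (auto simp: slot_def)
  show "(\<Union>i\<in>C v. slot N i) \<subseteq> {0..1}"
    using \<open>C v \<subseteq> {..<N}\<close> slot_subset_unit_interval by blast
  show "f v \<le> measure lebesgue (\<Union>i\<in>C v. slot N i)"
    using measure_UN_slot[OF assms(2) \<open>finite (C v)\<close>] \<open>card (C v) = a v\<close> assms(3) \<open>v \<in> V\<close>
    by simp
next
  fix u w assume "u \<in> V" "w \<in> V" "E u w"
  then have "C u \<inter> C w = {}"
    using assms(1) by (auto simp: multicolouring_def)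
  then have "slot N i \<inter> slot N j = {}" if "i \<in> C u" and "j \<in> C w" for i j
    using that by (intro slot_disjoint[OF assms(2)]) blast
  then show "(\<Union>i\<in>C u. slot N i) \<inter> (\<Union>i\<in>C w. slot N i) = {}"
    by blast
qed

theorem theorem1p7:
  fixes V :: "'a set" and E :: "'a \<Rightarrow> 'a \<Rightarrow> bool" and f :: "'a \<Rightarrow> real"
  assumes "perfect_graph V E"
    and "demand_function V f"
    and "\<forall>v\<in>V. f v \<le> 1 / real (local_clique_number V E v)"
  shows "\<exists>\<phi>. f_colouring V E f \<phi>"
proof -
  have "simple_graph V E"
    using assms(1) by (simp add: perfect_graph_def)
  obtain N a where "0 < N" and a: "\<forall>v\<in>V. real (a v) = f v * real N"
    using nonneg_rationals_common_denominator[OF finite_simple_graph[OF \<open>simple_graph V E\<close>], of f]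
      assms(2)
    by (auto simp: demand_function_def)
  obtain C where "multicolouring V E (max_clique_weight V E a) a C"
    using perfect_graph_multicolouring[OF assms(1)] by blast
  then have "multicolouring V E N a C"
    using max_clique_weight_scaled_demand[OF \<open>simple_graph V E\<close> a assms(3)]
    by (rule multicolouring_mono)
  moreover have "\<forall>v\<in>V. f v \<le> real (a v) / real N"
    using a \<open>0 < N\<close> by simp
  ultimately show ?thesis
    using f_colouring_of_multicolouring \<open>0 < N\<close> by blast
qed

end
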